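(* Let $T$ be a tree on $n$ vertices. Then \[ D_{\max}(T)-\partial(T)\geq \frac{2n-2-\sqrt{4n^2-12n+12}}{2} \] and \[ 2D_{\max}(T)-\partial^Q(T)\geq \frac{3n-4-\sqrt{9n^2-32n+32}}{2}, \] with equality (in either inequality) if and only if $T\cong K_{1,n-1}$.
   Context: For a connected graph $G$ with vertex set $\{v_1,\dots,v_n\}$, the distance matrix $D(G)$ is the $n\times n$ matrix whose $(i,j)$-entry is the distance between $v_i$ and $v_j$, and $\partial(G)$ denotes its largest eigenvalue (the distance spectral radius). The transmission $D_i$ of $v_i$ is the $i$-th row sum of $D(G)$, and $D_{\max}(G)$ is the maximum transmission over all vertices. The distance signless Laplacian matrix is $Q(G)=D(G)+\mathrm{diag}(D_1,\dots,D_n)$, and $\partial^Q(G)$ denotes its largest eigenvalue. $K_{1,n-1}$ is the star on $n$ vertices. *)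

theory Defs
  imports "HOL-Analysis.Analysis"
begin

definition simple_graph :: "('v \<Rightarrow> 'v \<Rightarrow> bool) \<Rightarrow> bool" where
  "simple_graph E \<longleftrightarrow> (\<forall>u v. E u v \<longrightarrow> E v u) \<and> (\<forall>v. \<not> E v v)"

definition is_walk :: "('v \<Rightarrow> 'v \<Rightarrow> bool) \<Rightarrow> 'v list \<Rightarrow> bool" where
  "is_walk E xs \<longleftrightarrow> xs \<noteq> [] \<and> (\<forall>i. Suc i < length xs \<longrightarrow> E (xs ! i) (xs ! Suc i))"

definition graph_connected :: "('v \<Rightarrow> 'v \<Rightarrow> bool) \<Rightarrow> bool" where
  "graph_connected E \<longleftrightarrow>
     (\<forall>u v. \<exists>xs. is_walk E xs \<and> hd xs = u \<and> last xs = v)"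

definition is_cycle :: "('v \<Rightarrow> 'v \<Rightarrow> bool) \<Rightarrow> 'v list \<Rightarrow> bool" where
  "is_cycle E xs \<longleftrightarrow> length xs \<ge> 3 \<and> distinct xs \<and> is_walk E xs \<and> E (last xs) (hd xs)"

definition is_tree :: "('v \<Rightarrow> 'v \<Rightarrow> bool) \<Rightarrow> bool" where
  "is_tree E \<longleftrightarrow> simple_graph E \<and> graph_connected E \<and> (\<nexists>xs. is_cycle E xs)"

definition gdist :: "('v \<Rightarrow> 'v \<Rightarrow> bool) \<Rightarrow> 'v \<Rightarrow> 'v \<Rightarrow> nat" where
  "gdist E u v = (LEAST k. \<exists>xs. is_walk E xs \<and> hd xs = u \<and> last xs = v \<and> length xs = Suc k)"

definition dist_matrix :: "('v::finite \<Rightarrow> 'v \<Rightarrow> bool) \<Rightarrow> real^'v^'v" where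
  "dist_matrix E = (\<chi> i j. real (gdist E i j))"

definition transmission :: "('v::finite \<Rightarrow> 'v \<Rightarrow> bool) \<Rightarrow> 'v \<Rightarrow> real" where
  "transmission E i = (\<Sum>j\<in>UNIV. dist_matrix E $ i $ j)"

definition Dmax :: "('v::finite \<Rightarrow> 'v \<Rightarrow> bool) \<Rightarrow> real" where
  "Dmax E = Max (range (transmission E))"

definition dist_signless_laplacian :: "('v::finite \<Rightarrow> 'v \<Rightarrow> bool) \<Rightarrow> real^'v^'v" where
  "dist_signless_laplacian E =
     dist_matrix E + (\<chi> i j. if i = j then transmission E i else 0)"

text \<open>Largest (real) eigenvalue of a real square matrix (used for symmetric matrices,
  whose eigenvalues are all real).\<close>
definition largest_eigenvalue :: "real^'v^'v \<Rightarrow> real" where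
  "largest_eigenvalue A = Max {mu. \<exists>x. x \<noteq> 0 \<and> A *v x = mu *\<^sub>R x}"

definition is_star :: "('v \<Rightarrow> 'v \<Rightarrow> bool) \<Rightarrow> bool" where
  "is_star E \<longleftrightarrow> (\<exists>c. \<forall>u v. E u v \<longleftrightarrow> u \<noteq> v \<and> (u = c \<or> v = c))"

end

theory Submission
  imports Defs
begin

(* If T is not a star, the ends of a longest path are leaves whose neighbours p and q are
   distinct, and a leaf u attached to p has transmission T(u) = T(p) + n - 2; hence
   Dmax - T(p) and Dmax - T(q) are at least n - 2.  As off-diagonal distances are at least 1,
   the form sum_i T(i) x_i^2 - x'Dx dominates n |x|^2 - (sum_i x_i)^2, and a weighted
   Cauchy-Schwarz inequality exploiting the two large weights at p and q yields
   x'(D + (c - 1) diag T)x <= (c Dmax - lam) |x|^2 for (c, lam) = (1, 1/2) and (2, 2/3).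
   Both gaps exceed the bounds of the theorem, which are therefore strict.
   For the star, D and Q act on the centre and on the leaves by explicit formulas; their
   spectral radii are the larger roots of explicit quadratics and the bounds are attained. *)

definition is_path :: "('v \<Rightarrow> 'v \<Rightarrow> bool) \<Rightarrow> 'v list \<Rightarrow> bool" where
  "is_path E xs \<longleftrightarrow> is_walk E xs \<and> distinct xs"

definition is_leaf :: "('v \<Rightarrow> 'v \<Rightarrow> bool) \<Rightarrow> 'v \<Rightarrow> 'v \<Rightarrow> bool" where
  "is_leaf E u p \<longleftrightarrow> (\<forall>y. E u y \<longleftrightarrow> y = p)"

lemma other_vertex:
  fixes c :: "'v::finite"
  assumes "2 \<le> CARD('v)"
  obtains l where "l \<noteq> c"
proof -
  have "UNIV \<noteq> {c}"
  proof
    assume "UNIV = {c}"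
    then have "card (UNIV :: 'v set) = card {c}" by (rule arg_cong)
    with assms show False by simp
  qed
  then show ?thesis using that by blast
qed

lemma simple_graph_sym: "simple_graph E \<Longrightarrow> E u v \<Longrightarrow> E v u"
  by (simp add: simple_graph_def)

lemma simple_graph_irrefl: "simple_graph E \<Longrightarrow> \<not> E v v"
  by (simp add: simple_graph_def)

lemma is_walk_Cons:
  "is_walk E (y # xs) \<longleftrightarrow> xs = [] \<or> E y (hd xs) \<and> is_walk E xs"
  unfolding is_walk_def by (cases xs) (auto simp: nth_Cons split: nat.split)

lemma is_walk_singleton [simp]: "is_walk E [x]"
  by (simp add: is_walk_def)

lemma is_walk_nonempty: "is_walk E xs \<Longrightarrow> xs \<noteq> []"
  by (simp add: is_walk_def)

lemma is_walk_rev: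
  assumes "simple_graph E" and "is_walk E xs"
  shows "is_walk E (rev xs)"
  unfolding is_walk_def
proof (intro conjI allI impI)
  show "rev xs \<noteq> []" using is_walk_nonempty[OF assms(2)] by simp
  fix i assume i: "Suc i < length (rev xs)"
  let ?j = "length xs - 2 - i"
  have "E (xs ! ?j) (xs ! Suc ?j)" using assms(2) i unfolding is_walk_def by auto
  moreover have "rev xs ! i = xs ! Suc ?j" "rev xs ! Suc i = xs ! ?j"
    using i by (simp_all add: rev_nth Suc_diff_Suc)
  ultimately show "E (rev xs ! i) (rev xs ! Suc i)" using simple_graph_sym[OF assms(1)] by metis
qed

lemma walk_closed_set:
  assumes "is_walk E xs" "hd xs \<in> S" "\<And>a b. a \<in> S \<Longrightarrow> E a b \<Longrightarrow> b \<in> S"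
  shows "set xs \<subseteq> S"
  using assms(1,2)
proof (induction xs)
  case (Cons y ys)
  then show ?case by (cases ys) (auto simp: is_walk_Cons assms(3))
qed simp

lemma connected_closed_set:
  assumes "graph_connected E" "a \<in> S" "\<And>a b. a \<in> S \<Longrightarrow> E a b \<Longrightarrow> b \<in> S"
  shows "v \<in> S"
proof -
  obtain xs where xs: "is_walk E xs" "hd xs = a" "last xs = v"
    using assms(1) unfolding graph_connected_def by blast
  then show ?thesis using walk_closed_set[of E xs S] assms(2,3) is_walk_nonempty[of E xs] by auto
qed

lemma shortest_walk:
  assumes "graph_connected E"
  obtains xs where "is_walk E xs" "hd xs = u" "last xs = v" "length xs = Suc (gdist E u v)"
proof -
  obtain xs where xs: "is_walk E xs" "hd xs = u" "last xs = v"
    using assms unfolding graph_connected_def by blast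
  then have "length xs = Suc (length xs - 1)" using is_walk_nonempty by fastforce
  with xs have "\<exists>k xs. is_walk E xs \<and> hd xs = u \<and> last xs = v \<and> length xs = Suc k" by blast
  then have "\<exists>xs. is_walk E xs \<and> hd xs = u \<and> last xs = v \<and> length xs = Suc (gdist E u v)"
    unfolding gdist_def by (rule LeastI_ex)
  then show ?thesis using that by blast
qed

lemma gdist_le_length:
  assumes "is_walk E xs" "hd xs = u" "last xs = v"
  shows "gdist E u v \<le> length xs - 1"
proof -
  have "length xs = Suc (length xs - 1)" using is_walk_nonempty[OF assms(1)] by simp
  with assms show ?thesis unfolding gdist_def by (metis (mono_tags, lifting) Least_le)
qed

lemma gdist_self [simp]: "gdist E u u = 0"
  using gdist_le_length[of E "[u]"] by simp

lemma gdist_eq_0_iff: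
  assumes "graph_connected E"
  shows "gdist E u v = 0 \<longleftrightarrow> u = v"
proof
  assume "gdist E u v = 0"
  then obtain xs where "hd xs = u" "last xs = v" "length xs = 1"
    using shortest_walk[OF assms, of u v] by auto
  then show "u = v" by (cases xs) auto
qed simp

lemma gdist_eq_1_iff:
  assumes "simple_graph E" "graph_connected E"
  shows "gdist E u v = 1 \<longleftrightarrow> E u v"
proof
  assume d1: "gdist E u v = 1"
  obtain xs where xs: "is_walk E xs" "hd xs = u" "last xs = v" "length xs = Suc (gdist E u v)"
    using shortest_walk[OF assms(2), of u v] by blast
  then obtain a b where "xs = [a, b]" using d1 by (auto simp: length_Suc_conv)
  with xs show "E u v" by (simp add: is_walk_Cons)
next
  assume e: "E u v"
  then have "is_walk E [u, v]" by (simp add: is_walk_Cons)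
  then have "gdist E u v \<le> 1" using gdist_le_length[of E "[u, v]" u v] by simp
  moreover have "gdist E u v \<noteq> 0"
    using e simple_graph_irrefl[OF assms(1)] gdist_eq_0_iff[OF assms(2), of u v] by auto
  ultimately show "gdist E u v = 1" by simp
qed

lemma gdist_sym:
  assumes "simple_graph E" "graph_connected E"
  shows "gdist E u v = gdist E v u"
proof -
  have le: "gdist E a b \<le> gdist E b a" for a b
  proof -
    obtain xs where xs: "is_walk E xs" "hd xs = b" "last xs = a" "length xs = Suc (gdist E b a)"
      using shortest_walk[OF assms(2)] by blast
    then have "xs \<noteq> []" by auto
    with xs have "gdist E a b \<le> length (rev xs) - 1"
      by (intro gdist_le_length is_walk_rev[OF assms(1)]) (auto simp: hd_rev last_rev)
    with xs show ?thesis by simp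
  qed
  show ?thesis using le[of u v] le[of v u] by simp
qed

lemma gdist_from_leaf:
  assumes "graph_connected E" "is_leaf E u p" "v \<noteq> u"
  shows "gdist E u v = Suc (gdist E p v)"
proof (rule antisym)
  obtain ys where ys: "is_walk E ys" "hd ys = p" "last ys = v" "length ys = Suc (gdist E p v)"
    using shortest_walk[OF assms(1)] by blast
  then have "is_walk E (u # ys)" "ys \<noteq> []"
    using assms(2) by (auto simp: is_walk_Cons is_leaf_def)
  with ys have "gdist E u v \<le> length (u # ys) - 1" by (intro gdist_le_length) auto
  with ys show "gdist E u v \<le> Suc (gdist E p v)" by simp
next
  obtain xs where xs: "is_walk E xs" "hd xs = u" "last xs = v" "length xs = Suc (gdist E u v)"
    using shortest_walk[OF assms(1)] by blast
  have "gdist E u v \<noteq> 0" using assms(3) gdist_eq_0_iff[OF assms(1), of u v] by simp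
  then obtain y zs where xyz: "xs = u # y # zs"
    using xs by (cases xs; cases "tl xs") auto
  with xs assms(2) have "y = p" "is_walk E (y # zs)" by (auto simp: is_walk_Cons is_leaf_def)
  with xs xyz have "gdist E p v \<le> length (y # zs) - 1" by (intro gdist_le_length) auto
  with xs xyz show "Suc (gdist E p v) \<le> gdist E u v" by simp
qed

lemma is_tree_simple: "is_tree E \<Longrightarrow> simple_graph E"
  by (simp add: is_tree_def)

lemma is_tree_connected: "is_tree E \<Longrightarrow> graph_connected E"
  by (simp add: is_tree_def)

lemma longest_path_starts_at_leaf:
  assumes "simple_graph E" "\<nexists>ys. is_cycle E ys" "is_path E xs"
    and longest: "\<And>ys. is_path E ys \<Longrightarrow> length ys \<le> length xs"
    and "2 \<le> length xs"
  shows "is_leaf E (xs ! 0) (xs ! 1)"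
  unfolding is_leaf_def
proof (intro allI iffI)
  have walk: "is_walk E xs" and dist: "distinct xs" using assms(3) by (auto simp: is_path_def)
  fix y assume e: "E (xs ! 0) y"
  show "y = xs ! 1"
  proof (cases "y \<in> set xs")
    case False
    have "hd xs = xs ! 0" using assms(5) by (cases xs) auto
    then have "E y (hd xs)" using e simple_graph_sym[OF assms(1)] by simp
    then have "is_path E (y # xs)" using False walk dist by (simp add: is_path_def is_walk_Cons)
    then show ?thesis using longest[of "y # xs"] by simp
  next
    case True
    then obtain i where i: "i < length xs" "xs ! i = y" by (metis in_set_conv_nth)
    have "i \<noteq> 0"
    proof
      assume "i = 0"
      with e i have "E y y" by simp
      then show False using simple_graph_irrefl[OF assms(1)] by blast
    qed
    moreover have "\<not> 2 \<le> i"
    proof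
      assume "2 \<le> i"
      let ?ys = "take (Suc i) xs"
      have "last ?ys = y" using i by (simp add: take_Suc_conv_app_nth)
      moreover have "hd ?ys = xs ! 0" using i by (cases xs) auto
      ultimately have "is_cycle E ?ys"
        using \<open>2 \<le> i\<close> i walk dist e simple_graph_sym[OF assms(1)]
        by (auto simp: is_cycle_def is_walk_def)
      then show False using assms(2) by blast
    qed
    ultimately have "i = 1" by linarith
    with i show ?thesis by simp
  qed
next
  fix y assume "y = xs ! 1"
  then show "E (xs ! 0) y" using assms(3,5) by (simp add: is_path_def is_walk_def)
qed

lemma star_if_paths_short:
  assumes "simple_graph E" "graph_connected E" "is_leaf E l c"
    and short: "\<And>ys. is_path E ys \<Longrightarrow> length ys \<le> 3"
  shows "is_star E"
proof -
  note sym = simple_graph_sym[OF assms(1)] and irr = simple_graph_irrefl[OF assms(1)]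
  have leaf: "E l y \<longleftrightarrow> y = c" for y using assms(3) by (simp add: is_leaf_def)
  have back_to_c: "z = c" if cy: "E c y" and yz: "E y z" for y z
  proof (rule ccontr)
    assume "z \<noteq> c"
    have "y \<noteq> l" using \<open>z \<noteq> c\<close> yz leaf by auto
    moreover have "z \<noteq> l"
    proof
      assume "z = l"
      then have "y = c" using yz sym leaf by blast
      then show False using cy irr by blast
    qed
    moreover have "E z y" "E y c" "E c l" "y \<noteq> c" "z \<noteq> y" "l \<noteq> c"
      using cy yz sym irr leaf by blast+
    ultimately have "is_path E [z, y, c, l]"
      using \<open>z \<noteq> c\<close> by (simp add: is_path_def is_walk_Cons)
    then show False using short by force
  qed
  have near: "v = c \<or> E c v" for v
    using connected_closed_set[OF assms(2), of c "{c} \<union> {y. E c y}" v] back_to_c by auto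
  have "E u v \<longleftrightarrow> u \<noteq> v \<and> (u = c \<or> v = c)" for u v
  proof
    assume "E u v"
    then show "u \<noteq> v \<and> (u = c \<or> v = c)" using near[of u] back_to_c irr by blast
  next
    assume "u \<noteq> v \<and> (u = c \<or> v = c)"
    then show "E u v" using near[of u] near[of v] sym by blast
  qed
  then show ?thesis unfolding is_star_def by blast
qed

lemma longest_path_exists:
  fixes E :: "'v::finite \<Rightarrow> 'v \<Rightarrow> bool"
  assumes "is_path E zs"
  obtains xs where "is_path E xs" "\<And>ys. is_path E ys \<Longrightarrow> length ys \<le> length xs"
proof -
  have "length ys < Suc CARD('v)" if "is_path E ys" for ys
    using that distinct_card[of ys] card_mono[of UNIV "set ys"] by (simp add: is_path_def)
  then show ?thesis
    using that ex_has_greatest_nat[of "is_path E" zs length "Suc CARD('v)"] assms by blast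
qed

lemma nonstar_tree_has_two_leaves:
  fixes E :: "'v::finite \<Rightarrow> 'v \<Rightarrow> bool"
  assumes "is_tree E" "2 \<le> CARD('v)" "\<not> is_star E"
  obtains u1 p1 u2 p2 where "is_leaf E u1 p1" "is_leaf E u2 p2" "p1 \<noteq> p2" "4 \<le> CARD('v)"
proof -
  have simple: "simple_graph E" and conn: "graph_connected E" and acyc: "\<nexists>ys. is_cycle E ys"
    using assms(1) by (auto simp: is_tree_def)
  obtain u v :: 'v where "u \<noteq> v"
    using assms(2) card_le_Suc0_iff_eq[of "UNIV :: 'v set"] by auto
  then have "gdist E u v \<noteq> 0" using gdist_eq_0_iff[OF conn, of u v] by simp
  moreover obtain ws where "is_walk E ws" "length ws = Suc (gdist E u v)"
    using shortest_walk[OF conn] by blast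
  ultimately obtain a b where "E a b" unfolding is_walk_def by fastforce
  then have "is_path E [a, b]"
    using simple_graph_irrefl[OF simple] by (auto simp: is_path_def is_walk_Cons)
  then obtain xs where xs: "is_path E xs" and longest: "\<And>ys. is_path E ys \<Longrightarrow> length ys \<le> length xs"
    using longest_path_exists by blast
  let ?L = "length xs"
  have L2: "2 \<le> ?L" using longest \<open>is_path E [a, b]\<close> by fastforce
  have leaf1: "is_leaf E (xs ! 0) (xs ! 1)"
    using longest_path_starts_at_leaf[OF simple acyc xs longest L2] .
  have "is_path E (rev xs)" using xs is_walk_rev[OF simple] by (simp add: is_path_def)
  then have "is_leaf E (rev xs ! 0) (rev xs ! 1)"
    using longest_path_starts_at_leaf[OF simple acyc] longest L2 by simp
  moreover have "rev xs ! 0 = xs ! (?L - 1)" "rev xs ! 1 = xs ! (?L - 2)"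
    using L2 by (subst rev_nth; auto simp: numeral_2_eq_2)+
  ultimately have leaf2: "is_leaf E (xs ! (?L - 1)) (xs ! (?L - 2))" by simp
  have L4: "4 \<le> ?L"
  proof (rule ccontr)
    assume "\<not> 4 \<le> ?L"
    then have "length ys \<le> 3" if "is_path E ys" for ys using longest[OF that] by linarith
    then show False using star_if_paths_short[OF simple conn leaf1] assms(3) by blast
  qed
  have dist: "distinct xs" using xs by (simp add: is_path_def)
  then have "xs ! 1 \<noteq> xs ! (?L - 2)" using L4 nth_eq_iff_index_eq[of xs 1 "?L - 2"] by simp
  moreover have "4 \<le> CARD('v)" using L4 distinct_card[OF dist] card_mono[of UNIV "set xs"] by simp
  ultimately show ?thesis using leaf1 leaf2 that by blast
qed

lemma quadratic_nonneg_imp_linear_coeff_zero: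
  fixes a b :: real
  assumes "\<And>t. 0 \<le> t * a + t^2 * b"
  shows "a = 0"
proof (rule ccontr)
  assume "a \<noteq> 0"
  define K where "K = \<bar>b\<bar> + 1"
  have K: "K > 0" "b / K < 1" unfolding K_def by (simp_all add: add_strict_increasing2)
  have "0 \<le> (- a / K) * a + (- a / K)^2 * b" by (rule assms)
  also have "\<dots> = a^2 / K * (b / K - 1)"
    using K by (simp add: field_simps power2_eq_square)
  also have "\<dots> < 0" using K \<open>a \<noteq> 0\<close> by (intro mult_pos_neg) simp_all
  finally show False by simp
qed

lemma symmetric_matrix_inner:
  fixes A :: "real^'n^'n"
  assumes "transpose A = A"
  shows "(A *v x) \<bullet> y = x \<bullet> (A *v y)"
  by (metis assms dot_lmul_matrix vector_transpose_matrix)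

lemma eigenvectors_orthogonal:
  fixes A :: "real^'n^'n"
  assumes "transpose A = A" "A *v x = mu *\<^sub>R x" "A *v y = nu *\<^sub>R y" "mu \<noteq> nu"
  shows "x \<bullet> y = 0"
proof -
  have "mu * (x \<bullet> y) = nu * (x \<bullet> y)"
    using symmetric_matrix_inner[OF assms(1), of x y] assms(2,3) by simp
  then show ?thesis using assms(4) by simp
qed

(* largest_eigenvalue is a Max, so it is meaningful only once the real eigenvalues are shown
   to form a finite nonempty set. *)
lemma finite_eigenvalues:
  fixes A :: "real^'n^'n"
  assumes "transpose A = A"
  shows "finite {mu. \<exists>x. x \<noteq> 0 \<and> A *v x = mu *\<^sub>R x}" (is "finite ?S")
proof -
  define v where "v mu = (SOME x. x \<noteq> 0 \<and> A *v x = mu *\<^sub>R x)" for mu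
  have v: "v mu \<noteq> 0 \<and> A *v v mu = mu *\<^sub>R v mu" if "mu \<in> ?S" for mu
    using that unfolding v_def mem_Collect_eq by (rule someI_ex)
  have inj: "inj_on v ?S"
  proof (rule inj_onI)
    fix a b assume a: "a \<in> ?S" and b: "b \<in> ?S" and ab: "v a = v b"
    have "a *\<^sub>R v a = b *\<^sub>R v a" using v[OF a] v[OF b] ab by metis
    then show "a = b" using v[OF a] by simp
  qed
  have orth: "pairwise orthogonal (v ` ?S)"
  proof (rule pairwise_imageI)
    fix a b assume "a \<in> ?S" "b \<in> ?S" "a \<noteq> b"
    then show "orthogonal (v a) (v b)"
      unfolding orthogonal_def using eigenvectors_orthogonal[OF assms] v by blast
  qed
  have "0 \<notin> v ` ?S" using v by force
  then have "finite (v ` ?S)"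
    using orth by (intro independent_imp_finite pairwise_orthogonal_independent)
  then show ?thesis using inj finite_imageD by blast
qed

lemma rayleigh_maximizer_is_eigenvector:
  fixes A :: "real^'n^'n"
  assumes "transpose A = A"
    and le: "\<And>y. y \<bullet> (A *v y) \<le> m * (y \<bullet> y)"
    and eq: "x \<bullet> (A *v x) = m * (x \<bullet> x)"
  shows "A *v x = m *\<^sub>R x"
proof -
  define r where "r = m *\<^sub>R x - A *v x"
  define a b c where "a = x \<bullet> r" and "b = r \<bullet> (A *v x)" and "c = r \<bullet> (A *v r)"
  have rr: "r \<bullet> r = m * a - b"
    unfolding r_def a_def b_def by (simp add: inner_diff_left inner_commute)
  have "0 \<le> t * (2 * (r \<bullet> r)) + t^2 * (m * (r \<bullet> r) - c)" for t
  proof -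
    have "x \<bullet> (A *v r) = b"
      using symmetric_matrix_inner[OF assms(1), of x r] unfolding b_def by (simp add: inner_commute)
    then have "(x + t *\<^sub>R r) \<bullet> (A *v (x + t *\<^sub>R r)) = m * (x \<bullet> x) + 2 * t * b + t^2 * c"
      unfolding b_def c_def eq[symmetric]
      by (simp add: matrix_vector_right_distrib matrix_vector_mult_scaleR
          inner_add_left inner_add_right power2_eq_square algebra_simps)
    moreover have "(x + t *\<^sub>R r) \<bullet> (x + t *\<^sub>R r) = x \<bullet> x + 2 * t * a + t^2 * (r \<bullet> r)"
      unfolding a_def by (simp add: inner_add_left inner_add_right power2_eq_square algebra_simps inner_commute)
    ultimately have "m * (x \<bullet> x) + 2 * t * b + t^2 * c \<le> m * (x \<bullet> x + 2 * t * a + t^2 * (r \<bullet> r))"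
      using le[of "x + t *\<^sub>R r"] by simp
    moreover have "t * (2 * (r \<bullet> r)) + t^2 * (m * (r \<bullet> r) - c)
        = m * (x \<bullet> x + 2 * t * a + t^2 * (r \<bullet> r)) - (m * (x \<bullet> x) + 2 * t * b + t^2 * c)"
      unfolding rr by algebra
    ultimately show ?thesis by linarith
  qed
  then have "2 * (r \<bullet> r) = 0" by (rule quadratic_nonneg_imp_linear_coeff_zero)
  then have "r \<bullet> r = 0" by simp
  then have "m *\<^sub>R x - A *v x = 0" unfolding r_def by (simp only: inner_eq_zero_iff)
  then show ?thesis by simp
qed

lemma symmetric_matrix_has_eigenvector:
  fixes A :: "real^'n^'n"
  assumes "transpose A = A"
  shows "\<exists>mu x. x \<noteq> 0 \<and> A *v x = mu *\<^sub>R x"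
proof -
  define q where "q y = y \<bullet> (A *v y)" for y :: "real^'n"
  have "axis undefined 1 \<in> sphere (0::real^'n) 1" by simp
  moreover have "continuous_on (sphere 0 1) q" unfolding q_def by (intro continuous_intros)
  ultimately obtain x where x: "x \<in> sphere 0 1" and max: "\<And>y. y \<in> sphere 0 1 \<Longrightarrow> q y \<le> q x"
    using continuous_attains_sup[OF compact_sphere, of 0 1 q] by blast
  have "q y \<le> q x * (y \<bullet> y)" for y
  proof (cases "y = 0")
    case False
    then have "q ((1 / norm y) *\<^sub>R y) \<le> q x" by (intro max) simp
    moreover have "q ((1 / norm y) *\<^sub>R y) = q y / (y \<bullet> y)"
      unfolding q_def by (simp add: matrix_vector_mult_scaleR power2_eq_square dot_square_norm)
    ultimately show ?thesis using False by (simp add: divide_le_eq)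
  qed (simp add: q_def)
  moreover have "x \<bullet> x = 1" using x by (simp add: dot_square_norm)
  ultimately have "A *v x = q x *\<^sub>R x"
    using rayleigh_maximizer_is_eigenvector[OF assms] unfolding q_def by simp
  moreover have "x \<noteq> 0" using x by auto
  ultimately show ?thesis by blast
qed

lemma largest_eigenvalue_has_eigenvector:
  fixes A :: "real^'n^'n"
  assumes "transpose A = A"
  obtains x where "x \<noteq> 0" "A *v x = largest_eigenvalue A *\<^sub>R x"
proof -
  let ?S = "{mu. \<exists>x. x \<noteq> 0 \<and> A *v x = mu *\<^sub>R x}"
  have "?S \<noteq> {}" using symmetric_matrix_has_eigenvector[OF assms] by blast
  then have "largest_eigenvalue A \<in> ?S"
    unfolding largest_eigenvalue_def by (rule Max_in[OF finite_eigenvalues[OF assms]])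
  then show ?thesis using that by blast
qed

lemma eigenvalue_le_largest_eigenvalue:
  fixes A :: "real^'n^'n"
  assumes "transpose A = A" "x \<noteq> 0" "A *v x = mu *\<^sub>R x"
  shows "mu \<le> largest_eigenvalue A"
  unfolding largest_eigenvalue_def using assms(2,3) by (intro Max_ge[OF finite_eigenvalues[OF assms(1)]]) blast

lemma largest_eigenvalue_le:
  fixes A :: "real^'n^'n"
  assumes "transpose A = A" "\<And>x. x \<bullet> (A *v x) \<le> \<beta> * (x \<bullet> x)"
  shows "largest_eigenvalue A \<le> \<beta>"
proof -
  obtain x where x: "x \<noteq> 0" "A *v x = largest_eigenvalue A *\<^sub>R x"
    using largest_eigenvalue_has_eigenvector[OF assms(1)] .
  then have "largest_eigenvalue A * (x \<bullet> x) \<le> \<beta> * (x \<bullet> x)" using assms(2)[of x] by simp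
  then show ?thesis using x(1) by simp
qed

lemma add_fractions_le_1:
  fixes a b A B :: real
  assumes "0 < A" "0 < B" "a * B + b * A \<le> A * B"
  shows "a / A + b / B \<le> 1"
  using assms by (simp add: field_simps)

lemma sum_square_le_weighted_sum:
  fixes a x :: "'a \<Rightarrow> real"
  assumes pos: "\<And>i. i \<in> A \<Longrightarrow> 0 < a i" and "(\<Sum>i\<in>A. 1 / a i) \<le> 1"
  shows "(\<Sum>i\<in>A. x i)^2 \<le> (\<Sum>i\<in>A. a i * (x i)^2)"
proof -
  have "x i = (1 / sqrt (a i)) * (sqrt (a i) * x i)" if "i \<in> A" for i
    using pos[OF that] by simp
  then have "(\<Sum>i\<in>A. x i)^2 = (\<Sum>i\<in>A. (1 / sqrt (a i)) * (sqrt (a i) * x i))^2"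
    by (metis (no_types, lifting) sum.cong)
  also have "\<dots> \<le> (\<Sum>i\<in>A. (1 / sqrt (a i))^2) * (\<Sum>i\<in>A. (sqrt (a i) * x i)^2)"
    by (rule Cauchy_Schwarz_ineq_sum)
  also have "\<dots> = (\<Sum>i\<in>A. 1 / a i) * (\<Sum>i\<in>A. a i * (x i)^2)"
  proof -
    have "(1 / sqrt (a i))^2 = 1 / a i" "(sqrt (a i) * x i)^2 = a i * (x i)^2" if "i \<in> A" for i
      using pos[OF that] by (simp_all add: power_divide power_mult_distrib)
    then show ?thesis by (simp cong: sum.cong)
  qed
  also have "\<dots> \<le> (\<Sum>i\<in>A. a i * (x i)^2)"
  proof (rule mult_left_le_one_le)
    have "0 \<le> a i" if "i \<in> A" for i using pos[OF that] by simp
    then show "0 \<le> (\<Sum>i\<in>A. 1 / a i)" "0 \<le> (\<Sum>i\<in>A. a i * (x i)^2)"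
      by (simp_all add: sum_nonneg)
  qed (rule assms(2))
  finally show ?thesis .
qed

lemma complete_laplacian_form_plus_weights_ge:
  fixes w x :: "'v::finite \<Rightarrow> real"
  defines "n \<equiv> real CARD('v)"
  assumes w0: "\<And>i. 0 \<le> w i" and "p \<noteq> q" and wp: "W \<le> w p" and wq: "W \<le> w q" and "0 \<le> W"
    and lam: "lam < n" and cond: "2 / (n - lam + W) + (n - 2) / (n - lam) \<le> 1"
  shows "lam * (\<Sum>i\<in>UNIV. (x i)^2)
           \<le> (\<Sum>i\<in>UNIV. w i * (x i)^2) + n * (\<Sum>i\<in>UNIV. (x i)^2) - (\<Sum>i\<in>UNIV. x i)^2"
proof -
  define a where "a i = w i + n - lam" for i
  have apos: "0 < a i" for i using w0[of i] lam unfolding a_def by linarith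
  have "card (UNIV - {p, q} :: 'v set) = CARD('v) - 2"
    using \<open>p \<noteq> q\<close> by (simp add: card_Diff_subset)
  moreover have "2 \<le> CARD('v)"
    using \<open>p \<noteq> q\<close> card_mono[of UNIV "{p, q}"] by simp
  ultimately have card_rest: "real (card (UNIV - {p, q} :: 'v set)) = n - 2"
    unfolding n_def by (simp add: of_nat_diff)
  have "(\<Sum>i\<in>UNIV. 1 / a i) = 1 / a p + 1 / a q + (\<Sum>i\<in>UNIV - {p, q}. 1 / a i)"
    using \<open>p \<noteq> q\<close> sum.subset_diff[of "{p, q}" UNIV "\<lambda>i. 1 / a i"] by simp
  also have "\<dots> \<le> 1 / (n - lam + W) + 1 / (n - lam + W) + (\<Sum>i\<in>UNIV - {p, q}. 1 / (n - lam))"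
    using apos w0 wp wq lam \<open>0 \<le> W\<close> unfolding a_def
    by (intro add_mono sum_mono divide_left_mono) (auto simp: add_pos_nonneg)
  also have "\<dots> \<le> 1" using cond card_rest by simp
  finally have "(\<Sum>i\<in>UNIV. x i)^2 \<le> (\<Sum>i\<in>UNIV. a i * (x i)^2)"
    using sum_square_le_weighted_sum[of UNIV a] apos by blast
  also have "\<dots> = (\<Sum>i\<in>UNIV. w i * (x i)^2) + (n - lam) * (\<Sum>i\<in>UNIV. (x i)^2)"
    unfolding a_def by (simp add: algebra_simps sum.distrib sum_distrib_left sum_subtractf)
  finally show ?thesis by (simp add: algebra_simps)
qed

lemma quadratic_form_le_row_sums:
  fixes A :: "real^'n^'n"
  assumes sym: "transpose A = A" and ge: "\<And>i j. i \<noteq> j \<Longrightarrow> 1 \<le> A $ i $ j"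
  shows "x \<bullet> (A *v x) + (real CARD('n) * (x \<bullet> x) - (\<Sum>i\<in>UNIV. x $ i)^2)
           \<le> (\<Sum>i\<in>UNIV. (\<Sum>j\<in>UNIV. A $ i $ j) * (x $ i)^2)"
proof -
  have Aij: "A $ j $ i = A $ i $ j" for i j
    using sym by (metis transpose_def vec_lambda_beta)
  have "(x $ i - x $ j)^2 \<le> A $ i $ j * (x $ i - x $ j)^2" for i j
    using mult_right_mono[OF ge[of i j] zero_le_power2[of "x $ i - x $ j"]] by (cases "i = j") auto
  then have "(\<Sum>i\<in>UNIV. \<Sum>j\<in>UNIV. (x $ i - x $ j)^2)
      \<le> (\<Sum>i\<in>UNIV. \<Sum>j\<in>UNIV. A $ i $ j * (x $ i - x $ j)^2)"
    by (intro sum_mono)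
  moreover have "(\<Sum>i\<in>UNIV. \<Sum>j\<in>UNIV. (x $ i - x $ j)^2)
      = 2 * (real CARD('n) * (x \<bullet> x) - (\<Sum>i\<in>UNIV. x $ i)^2)"
    by (simp add: inner_vec_def power2_eq_square algebra_simps sum.distrib sum_subtractf
        sum_distrib_left sum_distrib_right)
  moreover have "(\<Sum>i\<in>UNIV. \<Sum>j\<in>UNIV. A $ i $ j * (x $ j)^2)
      = (\<Sum>i\<in>UNIV. \<Sum>j\<in>UNIV. A $ i $ j * (x $ i)^2)"
    using sum.swap[of "\<lambda>i j. A $ i $ j * (x $ j)^2" UNIV UNIV] Aij by simp
  then have "(\<Sum>i\<in>UNIV. \<Sum>j\<in>UNIV. A $ i $ j * (x $ i - x $ j)^2)
      = 2 * (\<Sum>i\<in>UNIV. (\<Sum>j\<in>UNIV. A $ i $ j) * (x $ i)^2) - 2 * (x \<bullet> (A *v x))"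
    by (simp add: inner_vec_def matrix_vector_mult_def power2_eq_square algebra_simps
        sum.distrib sum_subtractf sum_distrib_left sum_distrib_right)
  ultimately show ?thesis by argo
qed

lemma quadratic_form_le_two_small_row_sums:
  fixes D :: "real^'v^'v" and T :: "'v \<Rightarrow> real"
  defines "n \<equiv> real CARD('v)"
  assumes "transpose D = D" "\<And>i j. i \<noteq> j \<Longrightarrow> 1 \<le> D $ i $ j"
    and T: "\<And>i. T i = (\<Sum>j\<in>UNIV. D $ i $ j)" and Tmax: "\<And>i. T i \<le> Tmax"
    and pq: "p \<noteq> q" and Tp: "n - 2 \<le> Tmax - T p" and Tq: "n - 2 \<le> Tmax - T q"
    and c: "0 \<le> c" and lam: "lam < n" and cond: "2 / (n - lam + c * (n - 2)) + (n - 2) / (n - lam) \<le> 1"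
  shows "x \<bullet> (D *v x) + (c - 1) * (\<Sum>i\<in>UNIV. T i * (x $ i)^2) \<le> (c * Tmax - lam) * (x \<bullet> x)"
proof -
  have "2 \<le> CARD('v)" using pq card_mono[of UNIV "{p, q}"] by simp
  then have "0 \<le> c * (n - 2)" using c unfolding n_def by simp
  then have "lam * (\<Sum>i\<in>UNIV. (x $ i)^2)
      \<le> (\<Sum>i\<in>UNIV. c * (Tmax - T i) * (x $ i)^2) + n * (\<Sum>i\<in>UNIV. (x $ i)^2) - (\<Sum>i\<in>UNIV. x $ i)^2"
    using pq Tp Tq c lam cond Tmax unfolding n_def
    by (intro complete_laplacian_form_plus_weights_ge[where W = "c * (n - 2)"])
      (auto simp: n_def intro: mult_left_mono)
  moreover have "x \<bullet> (D *v x) + (n * (x \<bullet> x) - (\<Sum>i\<in>UNIV. x $ i)^2)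
      \<le> (\<Sum>i\<in>UNIV. T i * (x $ i)^2)"
    using quadratic_form_le_row_sums[OF assms(2,3)] T unfolding n_def by simp
  moreover have "x \<bullet> x = (\<Sum>i\<in>UNIV. (x $ i)^2)" by (simp add: inner_vec_def power2_eq_square)
  moreover have "(\<Sum>i\<in>UNIV. c * (Tmax - T i) * (x $ i)^2)
      = c * Tmax * (\<Sum>i\<in>UNIV. (x $ i)^2) - c * (\<Sum>i\<in>UNIV. T i * (x $ i)^2)"
    by (simp add: algebra_simps sum_subtractf sum_distrib_left)
  ultimately show ?thesis by (simp add: algebra_simps)
qed

lemma le_larger_quadratic_root:
  fixes \<alpha> \<gamma> e mu :: real
  assumes "(mu - \<alpha>) * (mu - \<gamma>) = e"
  shows "mu \<le> (\<alpha> + \<gamma> + sqrt ((\<alpha> - \<gamma>)^2 + 4 * e)) / 2"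
proof -
  have "(\<alpha> - \<gamma>)^2 + 4 * e = (2 * mu - \<alpha> - \<gamma>)^2"
    using assms by (simp add: power2_eq_square algebra_simps)
  then have "sqrt ((\<alpha> - \<gamma>)^2 + 4 * e) = \<bar>2 * mu - \<alpha> - \<gamma>\<bar>" by simp
  then show ?thesis by (simp add: abs_if field_simps)
qed

lemma larger_quadratic_root:
  fixes \<alpha> \<gamma> e :: real
  assumes "0 \<le> (\<alpha> - \<gamma>)^2 + 4 * e"
  defines "\<beta> \<equiv> (\<alpha> + \<gamma> + sqrt ((\<alpha> - \<gamma>)^2 + 4 * e)) / 2"
  shows "(\<beta> - \<alpha>) * (\<beta> - \<gamma>) = e"
proof -
  define r where "r = sqrt ((\<alpha> - \<gamma>)^2 + 4 * e)"
  have "r^2 = (\<alpha> - \<gamma>)^2 + 4 * e" unfolding r_def using assms(1) by simp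
  moreover have "(\<beta> - \<alpha>) * (\<beta> - \<gamma>) = (r^2 - (\<alpha> - \<gamma>)^2) / 4"
    unfolding \<beta>_def r_def[symmetric] by (simp add: field_simps power2_eq_square)
  ultimately show ?thesis by simp
qed

lemma star_pattern_eigenvalue_cases:
  fixes M :: "real^'v::finite^'v" and c :: 'v
  defines "n \<equiv> real CARD('v)"
  assumes "2 \<le> CARD('v)"
    and center: "\<And>x. (M *v x) $ c = (\<Sum>j\<in>UNIV. x $ j) + a * x $ c"
    and leaf: "\<And>x l. l \<noteq> c \<Longrightarrow> (M *v x) $ l = 2 * (\<Sum>j\<in>UNIV. x $ j) + k * x $ l - x $ c"
    and eig: "x \<noteq> 0" "M *v x = mu *\<^sub>R x"
  shows "(mu - (a + 1)) * (mu - (k + 2 * (n - 1))) = n - 1 \<or> mu = k"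
proof (rule disjCI)
  assume "mu \<noteq> k"
  define s where "s = (\<Sum>j\<in>UNIV. x $ j)"
  have row: "(M *v x) $ i = mu * x $ i" for i using eig(2) by simp
  have c_eq: "mu * x $ c = s + a * x $ c" using center[of x] row[of c] unfolding s_def by simp
  have l_eq: "(mu - k) * x $ l = 2 * s - x $ c" if "l \<noteq> c" for l
    using leaf[OF that, of x] row[of l] unfolding s_def by (simp add: algebra_simps)
  obtain l0 where "l0 \<noteq> c" using other_vertex[OF assms(2)] .
  define b where "b = x $ l0"
  have xl: "x $ l = b" if "l \<noteq> c" for l
  proof -
    have "(mu - k) * x $ l = (mu - k) * x $ l0" using l_eq[OF that] l_eq[OF \<open>l0 \<noteq> c\<close>] by simp
    then show ?thesis using \<open>mu \<noteq> k\<close> unfolding b_def by simp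
  qed
  have "s = x $ c + (\<Sum>j\<in>UNIV - {c}. x $ j)" unfolding s_def by (simp add: sum.remove)
  also have "\<dots> = x $ c + (n - 1) * b"
    using xl unfolding n_def by (simp add: card_Diff_subset of_nat_diff)
  finally have s: "s = x $ c + (n - 1) * b" .
  have xc: "x $ c = (mu - (k + 2 * (n - 1))) * b"
    using l_eq[OF \<open>l0 \<noteq> c\<close>] s unfolding b_def by (simp add: algebra_simps)
  have "b \<noteq> 0"
  proof
    assume "b = 0"
    then have "x $ j = 0" for j using xl xc by (cases "j = c") auto
    then show False using eig(1) by (simp add: vec_eq_iff)
  qed
  moreover have "(mu - (a + 1)) * x $ c = (n - 1) * b" using c_eq s by (simp add: algebra_simps)
  ultimately show "(mu - (a + 1)) * (mu - (k + 2 * (n - 1))) = n - 1"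
    using xc by (simp add: mult.assoc[symmetric])
qed

lemma largest_eigenvalue_star_pattern:
  fixes M :: "real^'v::finite^'v" and c :: 'v
  defines "n \<equiv> real CARD('v)"
  assumes "transpose M = M" "2 \<le> CARD('v)"
    and center: "\<And>x. (M *v x) $ c = (\<Sum>j\<in>UNIV. x $ j) + a * x $ c"
    and leaf: "\<And>x l. l \<noteq> c \<Longrightarrow> (M *v x) $ l = 2 * (\<Sum>j\<in>UNIV. x $ j) + k * x $ l - x $ c"
  shows "largest_eigenvalue M
    = (a + 1 + (k + 2 * (n - 1)) + sqrt ((a + 1 - (k + 2 * (n - 1)))^2 + 4 * (n - 1))) / 2"
proof -
  define \<alpha> \<gamma> where "\<alpha> = a + 1" and "\<gamma> = k + 2 * (n - 1)"
  define \<beta> where "\<beta> = (\<alpha> + \<gamma> + sqrt ((\<alpha> - \<gamma>)^2 + 4 * (n - 1))) / 2"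
  have "2 \<le> n" using assms(3) unfolding n_def by simp
  then have root: "(\<beta> - \<alpha>) * (\<beta> - \<gamma>) = n - 1"
    unfolding \<beta>_def by (intro larger_quadratic_root) simp
  have "\<bar>\<alpha> - \<gamma>\<bar> \<le> sqrt ((\<alpha> - \<gamma>)^2 + 4 * (n - 1))"
    using \<open>2 \<le> n\<close> by (simp add: real_le_rsqrt)
  then have "k \<le> \<beta>" using \<open>2 \<le> n\<close> unfolding \<beta>_def \<gamma>_def
    by (simp add: abs_if field_simps split: if_splits)
  obtain x where x: "x \<noteq> 0" "M *v x = largest_eigenvalue M *\<^sub>R x"
    using largest_eigenvalue_has_eigenvector[OF assms(2)] .
  from star_pattern_eigenvalue_cases[OF assms(3) center leaf x]
  have "largest_eigenvalue M \<le> \<beta>"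
  proof
    assume "(largest_eigenvalue M - (a + 1)) * (largest_eigenvalue M - (k + 2 * (real CARD('v) - 1)))
      = real CARD('v) - 1"
    then show ?thesis unfolding \<beta>_def \<alpha>_def \<gamma>_def n_def by (rule le_larger_quadratic_root)
  next
    assume "largest_eigenvalue M = k"
    then show ?thesis using \<open>k \<le> \<beta>\<close> by simp
  qed
  moreover have "\<beta> \<le> largest_eigenvalue M"
  proof -
    define y :: "real^'v" where "y = (\<chi> i. if i = c then \<beta> - \<gamma> else 1)"
    have yc: "y $ c = \<beta> - \<gamma>" and yl: "\<And>l. l \<noteq> c \<Longrightarrow> y $ l = 1"
      unfolding y_def by simp_all
    have sum_y: "(\<Sum>j\<in>UNIV. y $ j) = (\<beta> - \<gamma>) + (n - 1)"
      using yl unfolding n_def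
      by (simp add: sum.remove[of UNIV c] yc card_Diff_subset of_nat_diff)
    have "(M *v y) $ i = \<beta> * y $ i" for i
    proof (cases "i = c")
      case True
      have "\<beta> * (\<beta> - \<gamma>) = (\<beta> - \<gamma>) + (n - 1) + a * (\<beta> - \<gamma>)"
        using root unfolding \<alpha>_def by (simp add: algebra_simps)
      then show ?thesis using center[of y] sum_y yc True by simp
    next
      case False
      then show ?thesis using leaf[OF False, of y] sum_y yc yl[OF False] unfolding \<gamma>_def by simp
    qed
    then have "M *v y = \<beta> *\<^sub>R y" by (simp add: vec_eq_iff)
    moreover obtain l where "l \<noteq> c" using other_vertex[OF assms(3)] .
    then have "y \<noteq> 0" using yl by (metis zero_index zero_neq_one)
    ultimately show ?thesis by (intro eigenvalue_le_largest_eigenvalue[OF assms(2)])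
  qed
  ultimately show ?thesis unfolding \<beta>_def \<alpha>_def \<gamma>_def by simp
qed

lemma dist_matrix_symmetric:
  assumes "simple_graph E" "graph_connected E"
  shows "transpose (dist_matrix E) = dist_matrix E"
  using gdist_sym[OF assms] by (simp add: vec_eq_iff transpose_def dist_matrix_def)

lemma dist_signless_laplacian_symmetric:
  assumes "simple_graph E" "graph_connected E"
  shows "transpose (dist_signless_laplacian E) = dist_signless_laplacian E"
  using gdist_sym[OF assms]
  by (simp add: vec_eq_iff transpose_def dist_signless_laplacian_def dist_matrix_def)

lemma dist_matrix_off_diagonal_ge_1:
  assumes "graph_connected E" "i \<noteq> j"
  shows "1 \<le> dist_matrix E $ i $ j"
  using assms gdist_eq_0_iff[OF assms(1), of i j] by (simp add: dist_matrix_def)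

lemma transmission_eq: "transmission E i = (\<Sum>j\<in>UNIV. real (gdist E i j))"
  by (simp add: transmission_def dist_matrix_def)

lemma transmission_le_Dmax: "transmission E i \<le> Dmax E"
  unfolding Dmax_def by (rule Max_ge) auto

lemma dist_signless_laplacian_mult:
  "dist_signless_laplacian E *v x = dist_matrix E *v x + (\<chi> i. transmission E i * x $ i)"
proof -
  have "(\<chi> i j. if i = j then transmission E i else 0) *v x = (\<chi> i. transmission E i * x $ i)"
    by (simp add: vec_eq_iff matrix_vector_mult_def if_distrib[of "\<lambda>y. y * _"] cong: if_cong)
  then show ?thesis by (simp add: dist_signless_laplacian_def matrix_vector_mult_add_rdistrib)
qed

lemma transmission_of_leaf:
  fixes E :: "'v::finite \<Rightarrow> 'v \<Rightarrow> bool"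
  assumes "simple_graph E" "graph_connected E" "is_leaf E u p"
  shows "transmission E u = transmission E p + real CARD('v) - 2"
proof -
  have "gdist E p u = 1"
    using assms(3) gdist_eq_1_iff[OF assms(1,2)] simple_graph_sym[OF assms(1)]
    by (simp add: is_leaf_def)
  then have "real (gdist E u j) = 1 + real (gdist E p j) - (if j = u then 2 else 0)" for j
    using gdist_from_leaf[OF assms(2,3), of j] by auto
  then show ?thesis by (simp add: transmission_eq sum.distrib sum_subtractf)
qed

lemma nonstar_tree_two_small_transmissions:
  fixes E :: "'v::finite \<Rightarrow> 'v \<Rightarrow> bool"
  assumes "is_tree E" "2 \<le> CARD('v)" "\<not> is_star E"
  obtains p q where "p \<noteq> q" "real CARD('v) - 2 \<le> Dmax E - transmission E p"
    "real CARD('v) - 2 \<le> Dmax E - transmission E q" "4 \<le> CARD('v)"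
proof -
  have low: "real CARD('v) - 2 \<le> Dmax E - transmission E p" if "is_leaf E u p" for u p
    using transmission_of_leaf[OF is_tree_simple[OF assms(1)] is_tree_connected[OF assms(1)] that]
      transmission_le_Dmax[of E u] by linarith
  obtain u1 p1 u2 p2 where "is_leaf E u1 p1" "is_leaf E u2 p2" "p1 \<noteq> p2" "4 \<le> CARD('v)"
    using nonstar_tree_has_two_leaves[OF assms] .
  then show ?thesis using that low by blast
qed

lemma nonstar_tree_spectral_gaps:
  fixes E :: "'v::finite \<Rightarrow> 'v \<Rightarrow> bool"
  assumes "is_tree E" "2 \<le> CARD('v)" "\<not> is_star E"
  shows "1/2 \<le> Dmax E - largest_eigenvalue (dist_matrix E)"
    and "2/3 \<le> 2 * Dmax E - largest_eigenvalue (dist_signless_laplacian E)"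
proof -
  define n where "n = real CARD('v)"
  note simple = is_tree_simple[OF assms(1)] and conn = is_tree_connected[OF assms(1)]
  obtain p q where pq: "p \<noteq> q" "n - 2 \<le> Dmax E - transmission E p" "n - 2 \<le> Dmax E - transmission E q"
    and "4 \<le> CARD('v)"
    using nonstar_tree_two_small_transmissions[OF assms] unfolding n_def .
  then have "4 \<le> n" unfolding n_def by simp
  note bound = quadratic_form_le_two_small_row_sums[OF dist_matrix_symmetric[OF simple conn]
      dist_matrix_off_diagonal_ge_1[OF conn] transmission_def transmission_le_Dmax pq[unfolded n_def]]
  have cond1: "2 / (n - 1/2 + 1 * (n - 2)) + (n - 2) / (n - 1/2) \<le> 1"
    using \<open>4 \<le> n\<close> by (intro add_fractions_le_1) (simp_all add: field_simps)
  have "x \<bullet> (dist_matrix E *v x) \<le> (Dmax E - 1/2) * (x \<bullet> x)" for x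
    using bound[of 1 "1/2" x] cond1 \<open>4 \<le> n\<close> unfolding n_def by simp
  then show "1/2 \<le> Dmax E - largest_eigenvalue (dist_matrix E)"
    using largest_eigenvalue_le[OF dist_matrix_symmetric[OF simple conn]] by fastforce
  have cond2: "2 / (n - 2/3 + 2 * (n - 2)) + (n - 2) / (n - 2/3) \<le> 1"
    using \<open>4 \<le> n\<close> by (intro add_fractions_le_1) (simp_all add: field_simps)
  have "x \<bullet> (dist_signless_laplacian E *v x) \<le> (2 * Dmax E - 2/3) * (x \<bullet> x)" for x
  proof -
    have "x \<bullet> (dist_signless_laplacian E *v x)
        = x \<bullet> (dist_matrix E *v x) + (\<Sum>i\<in>UNIV. transmission E i * (x $ i)^2)"
      by (simp add: dist_signless_laplacian_mult inner_add_right)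
        (simp add: inner_vec_def power2_eq_square mult_ac)
    then show ?thesis using bound[of 2 "2/3" x] cond2 \<open>4 \<le> n\<close> unfolding n_def by simp
  qed
  then show "2/3 \<le> 2 * Dmax E - largest_eigenvalue (dist_signless_laplacian E)"
    using largest_eigenvalue_le[OF dist_signless_laplacian_symmetric[OF simple conn]] by fastforce
qed

lemma star_gdist:
  assumes "graph_connected E" and star: "\<And>u v. E u v \<longleftrightarrow> u \<noteq> v \<and> (u = c \<or> v = c)"
  shows "gdist E i j = (if i = j then 0 else if i = c \<or> j = c then 1 else 2)"
proof -
  have simple: "simple_graph E" using star by (auto simp: simple_graph_def)
  consider "i = j" | "i \<noteq> j" "i = c \<or> j = c" | "i \<noteq> j" "i \<noteq> c" "j \<noteq> c" by blast
  then show ?thesis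
  proof cases
    case 1
    then show ?thesis by simp
  next
    case 2
    then have "E i j" using star by blast
    then show ?thesis using 2 gdist_eq_1_iff[OF simple assms(1)] by simp
  next
    case 3
    then have "is_walk E [i, c, j]" using star by (simp add: is_walk_Cons)
    then have "gdist E i j \<le> 2" using gdist_le_length[of E "[i, c, j]" i j] by simp
    moreover have "gdist E i j \<noteq> 0" "gdist E i j \<noteq> 1"
      using 3 star gdist_eq_0_iff[OF assms(1), of i j] gdist_eq_1_iff[OF simple assms(1), of i j]
      by auto
    ultimately show ?thesis using 3 by simp
  qed
qed

lemma star_dist_matrix_rows:
  assumes "graph_connected E" "\<And>u v. E u v \<longleftrightarrow> u \<noteq> v \<and> (u = c \<or> v = c)"
  shows "(dist_matrix E *v x) $ c = (\<Sum>j\<in>UNIV. x $ j) - x $ c"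
    and "l \<noteq> c \<Longrightarrow> (dist_matrix E *v x) $ l = 2 * (\<Sum>j\<in>UNIV. x $ j) - 2 * x $ l - x $ c"
proof -
  have row: "(dist_matrix E *v x) $ i = (\<Sum>j\<in>UNIV. real (gdist E i j) * x $ j)" for i
    by (simp add: matrix_vector_mult_def dist_matrix_def)
  have "(dist_matrix E *v x) $ c = (\<Sum>j\<in>UNIV. x $ j - (if j = c then x $ j else 0))"
    unfolding row by (intro sum.cong) (auto simp: star_gdist[OF assms])
  then show "(dist_matrix E *v x) $ c = (\<Sum>j\<in>UNIV. x $ j) - x $ c"
    by (simp add: sum_subtractf)
  assume "l \<noteq> c"
  then have "(dist_matrix E *v x) $ l
      = (\<Sum>j\<in>UNIV. 2 * x $ j - (if j = l then 2 * x $ j else 0) - (if j = c then x $ j else 0))"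
    unfolding row by (intro sum.cong) (auto simp: star_gdist[OF assms])
  then show "(dist_matrix E *v x) $ l = 2 * (\<Sum>j\<in>UNIV. x $ j) - 2 * x $ l - x $ c"
    by (simp add: sum_subtractf sum_distrib_left)
qed

lemma star_transmission:
  fixes E :: "'v::finite \<Rightarrow> 'v \<Rightarrow> bool"
  assumes "graph_connected E" "\<And>u v. E u v \<longleftrightarrow> u \<noteq> v \<and> (u = c \<or> v = c)"
  shows "transmission E c = real CARD('v) - 1"
    and "l \<noteq> c \<Longrightarrow> transmission E l = 2 * real CARD('v) - 3"
proof -
  have T: "transmission E i = (dist_matrix E *v (\<chi> j. 1)) $ i" for i
    by (simp add: transmission_def matrix_vector_mult_def)
  show "transmission E c = real CARD('v) - 1"
    using star_dist_matrix_rows(1)[OF assms] unfolding T by simp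
  show "transmission E l = 2 * real CARD('v) - 3" if "l \<noteq> c"
    using star_dist_matrix_rows(2)[OF assms that] unfolding T by simp
qed

lemma star_Dmax:
  fixes E :: "'v::finite \<Rightarrow> 'v \<Rightarrow> bool"
  assumes "graph_connected E" "\<And>u v. E u v \<longleftrightarrow> u \<noteq> v \<and> (u = c \<or> v = c)" "2 \<le> CARD('v)"
  shows "Dmax E = 2 * real CARD('v) - 3"
  unfolding Dmax_def
proof (rule Max_eqI)
  show "y \<le> 2 * real CARD('v) - 3" if y: "y \<in> range (transmission E)" for y
  proof -
    obtain i where "y = transmission E i" using y by blast
    then show ?thesis using star_transmission[OF assms(1,2)] assms(3) by (cases "i = c") auto
  qed
  obtain l where "l \<noteq> c" using other_vertex[OF assms(3)] .
  then show "2 * real CARD('v) - 3 \<in> range (transmission E)"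
    using star_transmission(2)[OF assms(1,2)] by (metis rangeI)
qed simp

lemma star_dist_signless_laplacian_rows:
  fixes E :: "'v::finite \<Rightarrow> 'v \<Rightarrow> bool"
  assumes "graph_connected E" "\<And>u v. E u v \<longleftrightarrow> u \<noteq> v \<and> (u = c \<or> v = c)"
  shows "(dist_signless_laplacian E *v x) $ c = (\<Sum>j\<in>UNIV. x $ j) + (real CARD('v) - 2) * x $ c"
    and "l \<noteq> c \<Longrightarrow> (dist_signless_laplacian E *v x) $ l
           = 2 * (\<Sum>j\<in>UNIV. x $ j) + (2 * real CARD('v) - 5) * x $ l - x $ c"
  by (simp_all add: dist_signless_laplacian_mult star_dist_matrix_rows[OF assms]
      star_transmission[OF assms] algebra_simps)

lemma star_spectral_gaps:
  fixes E :: "'v::finite \<Rightarrow> 'v \<Rightarrow> bool"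
  assumes "is_tree E" "2 \<le> CARD('v)" "is_star E"
  defines "n \<equiv> real CARD('v)"
  shows "Dmax E - largest_eigenvalue (dist_matrix E) = (2*n - 2 - sqrt (4*n^2 - 12*n + 12)) / 2"
    and "2 * Dmax E - largest_eigenvalue (dist_signless_laplacian E)
           = (3*n - 4 - sqrt (9*n^2 - 32*n + 32)) / 2"
proof -
  note simple = is_tree_simple[OF assms(1)] and conn = is_tree_connected[OF assms(1)]
  obtain c where star: "\<And>u v. E u v \<longleftrightarrow> u \<noteq> v \<and> (u = c \<or> v = c)"
    using assms(3) unfolding is_star_def by blast
  have Dmax: "Dmax E = 2 * n - 3" unfolding n_def by (rule star_Dmax[OF conn star assms(2)])
  have "largest_eigenvalue (dist_matrix E)
      = (- 1 + 1 + (- 2 + 2 * (n - 1)) + sqrt ((- 1 + 1 - (- 2 + 2 * (n - 1)))^2 + 4 * (n - 1))) / 2"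
    unfolding n_def using star_dist_matrix_rows[OF conn star]
    by (intro largest_eigenvalue_star_pattern[where c = c] dist_matrix_symmetric simple conn assms(2))
      simp_all
  moreover have "(- 1 + 1 - (- 2 + 2 * (n - 1)))^2 + 4 * (n - 1) = 4*n^2 - 12*n + 12"
    by (simp add: power2_eq_square algebra_simps)
  ultimately show "Dmax E - largest_eigenvalue (dist_matrix E) = (2*n - 2 - sqrt (4*n^2 - 12*n + 12)) / 2"
    using Dmax by (simp only:) (simp add: field_simps)
  have "largest_eigenvalue (dist_signless_laplacian E)
      = (n - 2 + 1 + (2 * n - 5 + 2 * (n - 1))
         + sqrt ((n - 2 + 1 - (2 * n - 5 + 2 * (n - 1)))^2 + 4 * (n - 1))) / 2"
    unfolding n_def using star_dist_signless_laplacian_rows[OF conn star]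
    by (intro largest_eigenvalue_star_pattern[where c = c] dist_signless_laplacian_symmetric simple
        conn assms(2)) simp_all
  moreover have "(n - 2 + 1 - (2 * n - 5 + 2 * (n - 1)))^2 + 4 * (n - 1) = 9*n^2 - 32*n + 32"
    by (simp add: power2_eq_square algebra_simps)
  ultimately show "2 * Dmax E - largest_eigenvalue (dist_signless_laplacian E)
      = (3*n - 4 - sqrt (9*n^2 - 32*n + 32)) / 2"
    using Dmax by (simp only:) (simp add: field_simps)
qed

theorem theorem2:
  fixes E :: "'v::finite \<Rightarrow> 'v \<Rightarrow> bool"
  assumes "is_tree E" and "CARD('v) \<ge> 2"
  defines "n \<equiv> real CARD('v)"
  shows "(Dmax E - largest_eigenvalue (dist_matrix E)
           \<ge> (2*n - 2 - sqrt (4*n^2 - 12*n + 12)) / 2) \<and>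
         (2 * Dmax E - largest_eigenvalue (dist_signless_laplacian E)
           \<ge> (3*n - 4 - sqrt (9*n^2 - 32*n + 32)) / 2) \<and>
         (Dmax E - largest_eigenvalue (dist_matrix E)
           = (2*n - 2 - sqrt (4*n^2 - 12*n + 12)) / 2 \<longleftrightarrow> is_star E) \<and>
         (2 * Dmax E - largest_eigenvalue (dist_signless_laplacian E)
           = (3*n - 4 - sqrt (9*n^2 - 32*n + 32)) / 2 \<longleftrightarrow> is_star E)"
proof (cases "is_star E")
  case True
  then show ?thesis using star_spectral_gaps[OF assms(1,2) True] unfolding n_def by simp
next
  case False
  have "2*n - 3 < sqrt (4*n^2 - 12*n + 12)"
    by (rule real_less_rsqrt) (simp add: power2_eq_square algebra_simps)
  moreover have "3*n - 16/3 < sqrt (9*n^2 - 32*n + 32)"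
    by (rule real_less_rsqrt) (simp add: power2_eq_square algebra_simps)
  ultimately show ?thesis
    using nonstar_tree_spectral_gaps[OF assms(1,2) False] False unfolding n_def by auto
qed

end
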